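(* Let $p$ be a prime with $p\equiv 1$ or $6\pmod 7$ and $p\ne 13$. Define $\phi_2,\phi_3\in\overline{\mathbb{F}}_p[t]$ by: if $p\equiv6\pmod7$, $\phi_2=f\big(\tfrac{2p-5}{7},\tfrac{2p-5}{7},\tfrac{p-6}{7}\big)$ and $\phi_3=f\big(\tfrac{3p-4}{7},\tfrac{3p-4}{7},\tfrac{5p-2}{7}\big)$; if $p\equiv1\pmod7$, $\phi_2=f\big(\tfrac{2p-2}{7},\tfrac{2p-2}{7},\tfrac{p-1}{7}\big)$ and $\phi_3=f\big(\tfrac{3p-3}{7},\tfrac{3p-3}{7},\tfrac{5p-5}{7}\big)$. Then there exists $\alpha\in\overline{\mathbb{F}}_p\setminus\{0,1\}$ with $\phi_2(\alpha)=0$ and $\phi_3(\alpha)\ne0$, and there exists $\alpha'\in\overline{\mathbb{F}}_p\setminus\{0,1\}$ with $\phi_2(\alpha')\ne0$ and $\phi_3(\alpha')=0$.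
   Context: For non-negative integers $a,b,c$, $f(a,b,c)\in\overline{\mathbb{F}}_p[t]$ is $f(a,b,c)=\sum_{i_2+i_3=c}\binom{a}{i_2}\binom{b}{i_3}t^{i_2}$ (binomial coefficients reduced mod $p$, $\binom{n}{i}=0$ for $i<0$ or $i>n$). (These $\phi_2,\phi_3$ are the Hasse–Witt entries of the family of curves $y^7=x^3(x-t)(x-1)^2\cdots$ with monodromy $(7,4,(3,1,1,2))$ at the characters $\zeta_7^2,\zeta_7^3$, but the claim concerns only the explicit polynomials.) *)

theory Defs
  imports "HOL-Computational_Algebra.Polynomial"
begin

definition f_poly :: "nat \<Rightarrow> nat \<Rightarrow> nat \<Rightarrow> 'k::field poly" where
  "f_poly a b c = (\<Sum>i2 = 0..c. monom (of_nat (a choose i2) * of_nat (b choose (c - i2))) i2)"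

definition phi2 :: "nat \<Rightarrow> 'k::field poly" where
  "phi2 p = (if p mod 7 = 6
     then f_poly ((2*p - 5) div 7) ((2*p - 5) div 7) ((p - 6) div 7)
     else f_poly ((2*p - 2) div 7) ((2*p - 2) div 7) ((p - 1) div 7))"

definition phi3 :: "nat \<Rightarrow> 'k::field poly" where
  "phi3 p = (if p mod 7 = 6
     then f_poly ((3*p - 4) div 7) ((3*p - 4) div 7) ((5*p - 2) div 7)
     else f_poly ((3*p - 3) div 7) ((3*p - 3) div 7) ((5*p - 5) div 7))"

end

theory Submission
  imports Defs "HOL-Computational_Algebra.Primes"
begin

text \<open>
  With \<open>F\<^sub>a = f(a,a,k)\<close>, the polynomials \<open>\<phi>\<^sub>2\<close> and \<open>\<phi>\<^sub>3\<close> are \<open>F\<^sub>a\<close> and \<open>t\<^sup>b\<^sup>-\<^sup>k F\<^sub>b\<close>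
  (by the symmetry of binomial coefficients) for some \<open>2 \<le> k \<le> a < b\<close> with \<open>2b < p\<close>.
  Up to a constant, \<open>F\<^sub>a\<close> is the hypergeometric polynomial \<open>\<^sub>2F\<^sub>1(-a,-k;a+1-k;t)\<close>, so it
  satisfies Gauss's second order differential equation, which is regular away from \<open>0\<close> and \<open>1\<close>.
  Since \<open>F\<^sub>a(0), F\<^sub>a(1) \<noteq> 0\<close> and all multiplicities are below \<open>p\<close>, a double root would
  contradict the equation; hence \<open>F\<^sub>a\<close> is squarefree. If every root of \<open>F\<^sub>a\<close> were a root
  of \<open>F\<^sub>b\<close>, then \<open>F\<^sub>a\<close> would divide \<open>F\<^sub>b\<close>, and as both have degree \<open>k\<close> they would be
  proportional, which their two lowest coefficients rule out. The argument is symmetric in \<open>a\<close>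
  and \<open>b\<close>.
\<close>

lemma of_nat_neq_0_below_CHAR:
  assumes "0 < n" "n < CHAR('k::semiring_1)"
  shows "of_nat n \<noteq> (0::'k)"
  using assms by (auto simp: of_nat_eq_0_iff_char_dvd dest: dvd_imp_le)

lemma of_nat_choose_neq_0_below_CHAR:
  assumes "j \<le> n" "n < CHAR('k::idom)"
  shows "of_nat (n choose j) \<noteq> (0::'k)"
proof
  assume "of_nat (n choose j) = (0::'k)"
  then have "CHAR('k) dvd fact n"
    using binomial_fact_lemma[OF assms(1)] by (metis dvd_mult of_nat_eq_0_iff_char_dvd)
  moreover have "prime CHAR('k)"
    using assms(2) by (intro prime_CHAR_semidom) simp
  ultimately have "CHAR('k) \<le> n"
    using prime_dvd_fact_iff by blast
  with assms(2) show False by simp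
qed

lemma Suc_mult_binomial_Suc: "Suc j * (n choose Suc j) = (n - j) * (n choose j)"
  using binomial_absorption[of j n] binomial_absorb_comp[of n j] by simp

lemma coeff_f_poly:
  "coeff (f_poly a b c :: 'k::field poly) n =
     (if n \<le> c then of_nat (a choose n) * of_nat (b choose (c - n)) else 0)"
  unfolding f_poly_def by (simp add: coeff_sum coeff_monom)

lemma poly_f_poly_0: "poly (f_poly a b c :: 'k::field poly) 0 = of_nat (b choose c)"
  by (simp add: poly_0_coeff_0 coeff_f_poly)

lemma poly_f_poly_1: "poly (f_poly a b c :: 'k::field poly) 1 = of_nat ((a + b) choose c)"
proof -
  have "poly (f_poly a b c :: 'k poly) 1 = of_nat (\<Sum>i\<le>c. (a choose i) * (b choose (c - i)))"
    unfolding f_poly_def by (simp add: poly_sum poly_monom atLeast0AtMost)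
  also have "\<dots> = of_nat ((a + b) choose c)"
    by (simp only: vandermonde)
  finally show ?thesis .
qed

lemma degree_f_poly:
  assumes "c \<le> a" "a < CHAR('k::field)"
  shows "degree (f_poly a b c :: 'k poly) = c"
proof (rule antisym)
  show "degree (f_poly a b c :: 'k poly) \<le> c"
    by (rule degree_le) (simp add: coeff_f_poly)
  have "coeff (f_poly a b c :: 'k poly) c \<noteq> 0"
    using of_nat_choose_neq_0_below_CHAR[OF assms] by (simp add: coeff_f_poly)
  then show "c \<le> degree (f_poly a b c :: 'k poly)"
    by (rule le_degree)
qed

lemma f_poly_reflect:
  assumes "k \<le> b"
  shows "f_poly b b (2*b - k) = (monom 1 (b - k) * f_poly b b k :: 'k::field poly)"
proof (rule poly_eqI)
  fix n
  consider "n < b - k" | "b - k \<le> n" "n \<le> b" | "b < n"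
    by linarith
  then show "coeff (f_poly b b (2*b - k)) n = coeff (monom 1 (b - k) * f_poly b b k :: 'k poly) n"
  proof cases
    case 2
    have "k - (n - (b - k)) = b - n" "2*b - k - n = b - (n - (b - k))"
      using 2 assms by arith+
    moreover have "n - (b - k) \<le> b"
      using 2 by arith
    ultimately have "b choose n = b choose (k - (n - (b - k)))"
      and "b choose (2*b - k - n) = b choose (n - (b - k))"
      using binomial_symmetric 2(2) by metis+
    moreover have "coeff (f_poly b b (2*b - k) :: 'k poly) n
        = of_nat (b choose n) * of_nat (b choose (2*b - k - n))"
      using 2 assms by (simp add: coeff_f_poly)
    moreover have "coeff (monom 1 (b - k) * f_poly b b k :: 'k poly) n
        = of_nat (b choose (n - (b - k))) * of_nat (b choose (k - (n - (b - k))))"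
      using 2 by (simp add: coeff_f_poly coeff_monom_mult)
    ultimately show ?thesis
      by (simp only: mult.commute)
  qed (use assms in \<open>simp_all add: coeff_f_poly coeff_monom_mult binomial_eq_0\<close>)
qed

text \<open>Gauss's operator \<open>t(1-t)F'' + (\<gamma> - (A+B+1)t)F' - AB F\<close> with \<open>A = -\<alpha>\<close>, \<open>B = -\<beta>\<close>.\<close>

definition hypergeometric_operator :: "'k::field \<Rightarrow> 'k \<Rightarrow> 'k \<Rightarrow> 'k poly \<Rightarrow> 'k poly" where
  "hypergeometric_operator \<alpha> \<beta> \<gamma> F =
     [:0, 1, -1:] * pderiv (pderiv F) + [:\<gamma>, \<alpha> + \<beta> - 1:] * pderiv F - smult (\<alpha> * \<beta>) F"

lemma coeff_hypergeometric_operator: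
  "coeff (hypergeometric_operator \<alpha> \<beta> \<gamma> F) n =
     of_nat (Suc n) * (\<gamma> + of_nat n) * coeff F (Suc n) - (of_nat n - \<alpha>) * (of_nat n - \<beta>) * coeff F n"
proof -
  have "coeff ([:0, 1, -1:] * G) n = (if n = 0 then 0 else coeff G (n - 1)) - (if n \<le> 1 then 0 else coeff G (n - 2))"
    for G :: "'a poly"
    by (cases n; cases "n - 1") (auto simp: coeff_pCons)
  moreover have "coeff ([:\<gamma>, \<delta>:] * G) n = \<gamma> * coeff G n + (if n = 0 then 0 else \<delta> * coeff G (n - 1))"
    for G :: "'a poly" and \<delta>
    by (cases n) (auto simp: coeff_pCons)
  ultimately show ?thesis
    unfolding hypergeometric_operator_def
    by (cases n; cases "n - 1") (simp_all add: coeff_pderiv algebra_simps)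
qed

lemma f_poly_coeff_recurrence:
  assumes "k \<le> a"
  shows "of_nat (Suc n) * (of_nat (a + 1 - k) + of_nat n) * coeff (f_poly a a k :: 'k::field poly) (Suc n)
       = (of_nat n - of_nat a) * (of_nat n - of_nat k) * coeff (f_poly a a k) n"
proof (cases "n < k")
  case True
  have "(k - n) * (a choose (k - n)) = (a + 1 + n - k) * (a choose (k - Suc n))"
    using Suc_mult_binomial_Suc[of "k - Suc n" a] True assms
    by (simp add: Suc_diff_Suc)
  then have "Suc n * (a + 1 + n - k) * ((a choose Suc n) * (a choose (k - Suc n)))
      = (a - n) * (k - n) * ((a choose n) * (a choose (k - n)))"
    by (metis Suc_mult_binomial_Suc mult.assoc mult.left_commute)
  then have "(of_nat (Suc n) * of_nat (a + 1 + n - k)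
        * (of_nat (a choose Suc n) * of_nat (a choose (k - Suc n))) :: 'k)
      = of_nat (a - n) * of_nat (k - n) * (of_nat (a choose n) * of_nat (a choose (k - n)))"
    by (metis of_nat_mult)
  then show ?thesis
    using True assms by (simp add: coeff_f_poly of_nat_diff algebra_simps)
qed (simp add: coeff_f_poly)

lemma hypergeometric_operator_f_poly:
  assumes "k \<le> a"
  shows "hypergeometric_operator (of_nat a) (of_nat k) (of_nat (a + 1 - k)) (f_poly a a k) = (0 :: 'k::field poly)"
  by (rule poly_eqI)
    (simp only: coeff_hypergeometric_operator f_poly_coeff_recurrence[OF assms] coeff_0 diff_self)

lemma order_le_1_of_ode:
  fixes F P Q R :: "'k::field poly"
  assumes ode: "P * pderiv (pderiv F) + Q * pderiv F + R * F = 0" and "F \<noteq> 0"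
    and "poly P \<alpha> \<noteq> 0"
    and "order \<alpha> F < CHAR('k)"
  shows "order \<alpha> F \<le> 1"
proof (rule ccontr)
  assume "\<not> order \<alpha> F \<le> 1"
  then obtain j where m: "order \<alpha> F = Suc (Suc j)"
    by (intro that[of "order \<alpha> F - 2"]) simp
  define x where "x = [:-\<alpha>, 1:]"
  obtain G where FG: "F = x ^ Suc (Suc j) * G" and "\<not> x dvd G"
    using order_decomp[OF \<open>F \<noteq> 0\<close>, of \<alpha>] m x_def by auto
  then have G\<alpha>: "poly G \<alpha> \<noteq> 0"
    by (simp add: x_def poly_eq_0_iff_dvd)
  have "pderiv x = 1"
    by (simp add: x_def pderiv_pCons)
  define K where "K = smult (of_nat (Suc (Suc j))) G + x * pderiv G"
  have F1: "pderiv F = x ^ Suc j * K"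
    unfolding FG K_def pderiv_mult pderiv_power_Suc \<open>pderiv x = 1\<close> by (simp add: algebra_simps)
  have F2: "pderiv (pderiv F) = x ^ j * (smult (of_nat (Suc j)) K + x * pderiv K)"
    unfolding F1 pderiv_mult pderiv_power_Suc \<open>pderiv x = 1\<close> by (simp add: algebra_simps)
  \<comment> \<open>cancel \<open>x ^ j\<close> from the equation and look at the remaining lowest-order term at \<open>\<alpha>\<close>\<close>
  have "P * (x ^ j * (smult (of_nat (Suc j)) K + x * pderiv K)) + Q * (x ^ Suc j * K) + R * F = 0"
    unfolding F2[symmetric] F1[symmetric] by (rule ode)
  then have "x ^ j * (P * (smult (of_nat (Suc j)) K + x * pderiv K) + Q * x * K + R * x * x * G) = 0"
    unfolding FG by (simp add: algebra_simps)
  then have "P * (smult (of_nat (Suc j)) K + x * pderiv K) + Q * x * K + R * x * x * G = 0"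
    by (simp add: x_def)
  then have "poly (P * (smult (of_nat (Suc j)) K + x * pderiv K) + Q * x * K + R * x * x * G) \<alpha> = 0"
    by (simp only: poly_0)
  then have "poly P \<alpha> * (of_nat (Suc j) * of_nat (Suc (Suc j)) * poly G \<alpha>) = 0"
    by (simp add: x_def K_def)
  moreover have "of_nat (Suc j) \<noteq> (0::'k)" "of_nat (Suc (Suc j)) \<noteq> (0::'k)"
    using \<open>order \<alpha> F < CHAR('k)\<close> m by (intro of_nat_neq_0_below_CHAR; simp)+
  ultimately show False
    using G\<alpha> \<open>poly P \<alpha> \<noteq> 0\<close> by simp
qed

lemma rsquarefree_f_poly:
  assumes "k \<le> a" "2 * a < CHAR('k::field)"
  shows "rsquarefree (f_poly a a k :: 'k poly)"
  unfolding rsquarefree_def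
proof (intro conjI allI)
  define F where "F = (f_poly a a k :: 'k poly)"
  have deg: "degree F = k"
    unfolding F_def using assms by (intro degree_f_poly) auto
  have F0: "poly F 0 \<noteq> 0" and F1: "poly F 1 \<noteq> 0"
    unfolding F_def poly_f_poly_0 poly_f_poly_1
    using assms by (simp_all add: of_nat_choose_neq_0_below_CHAR)
  then show "F \<noteq> 0"
    by auto
  fix \<alpha> :: 'k
  show "order \<alpha> F = 0 \<or> order \<alpha> F = 1"
  proof (cases "poly F \<alpha> = 0")
    case True
    with F0 F1 have regular: "poly [:0, 1, -1:] \<alpha> \<noteq> 0"
      by (auto simp: algebra_simps)
    have ode: "[:0, 1, -1:] * pderiv (pderiv F) + [:of_nat (a + 1 - k), of_nat a + of_nat k - 1:] * pderiv F
        + [:- (of_nat a * of_nat k):] * F = 0"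
      using hypergeometric_operator_f_poly[OF assms(1), where 'k='k]
      unfolding F_def hypergeometric_operator_def by simp
    have "order \<alpha> F < CHAR('k)"
      using order_degree[OF \<open>F \<noteq> 0\<close>, of \<alpha>] deg assms by simp
    with ode \<open>F \<noteq> 0\<close> regular have "order \<alpha> F \<le> 1"
      by (rule order_le_1_of_ode)
    then show ?thesis
      by auto
  qed (simp add: order_0I)
qed

lemma rsquarefree_dvd_of_roots:
  fixes F G :: "'k::alg_closed_field poly"
  assumes "rsquarefree F" "\<And>x. poly F x = 0 \<Longrightarrow> poly G x = 0"
  shows "F dvd G"
  using assms
proof (induction "degree F" arbitrary: F G rule: less_induct)
  case (less F)
  have "F \<noteq> 0" and order_le_1: "order x F \<le> 1" for x
    using less.prems(1) unfolding rsquarefree_def by (metis le_refl zero_le)+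
  show ?case
  proof (cases "degree F = 0")
    case True
    with \<open>F \<noteq> 0\<close> show ?thesis
      by (auto simp: const_poly_dvd_iff dvd_field_iff elim!: degree_eq_zeroE)
  next
    case False
    then obtain r where "poly F r = 0"
      using alg_closed_imp_poly_has_root by blast
    then obtain F1 where F1: "F = [:-r, 1:] * F1"
      by (metis dvdE poly_eq_0_iff_dvd)
    obtain G1 where G1: "G = [:-r, 1:] * G1"
      using less.prems(2)[OF \<open>poly F r = 0\<close>] by (metis dvdE poly_eq_0_iff_dvd)
    have "F1 \<noteq> 0"
      using \<open>F \<noteq> 0\<close> F1 by auto
    have order_F: "order x F = order x [:-r, 1:] + order x F1" for x
      using order_mult[of "[:-r, 1:]" F1 x] F1 \<open>F \<noteq> 0\<close> by simp
    have "order r [:-r, 1:] = 1"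
      using order_power_n_n[of r 1] by simp
    with order_F[of r] order_le_1[of r] have "order r F1 = 0"
      by simp
    with \<open>F1 \<noteq> 0\<close> have "poly F1 r \<noteq> 0"
      by (simp add: order_root)
    have "F1 dvd G1"
    proof (rule less.hyps)
      show "degree F1 < degree F"
        using \<open>F1 \<noteq> 0\<close> unfolding F1 by (subst degree_mult_eq) auto
      have "order x F1 \<le> 1" for x
        using order_F[of x] order_le_1[of x] by simp
      with \<open>F1 \<noteq> 0\<close> show "rsquarefree F1"
        unfolding rsquarefree_def by (metis le_Suc_eq le_zero_eq One_nat_def)
      show "poly G1 x = 0" if "poly F1 x = 0" for x
        using that less.prems(2)[of x] F1 G1 \<open>poly F1 r \<noteq> 0\<close> by auto
    qed
    then show ?thesis
      unfolding F1 G1 by (rule mult_dvd_mono[OF dvd_refl])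
  qed
qed

lemma exists_root_not_root_of_not_smult:
  fixes F G :: "'k::alg_closed_field poly"
  assumes "rsquarefree F" "degree G \<le> degree F" "\<And>c. G \<noteq> smult c F"
  shows "\<exists>x. poly F x = 0 \<and> poly G x \<noteq> 0"
proof (rule ccontr)
  assume "\<not> ?thesis"
  then have "F dvd G"
    using rsquarefree_dvd_of_roots[OF assms(1)] by blast
  then obtain H where H: "G = F * H"
    by (elim dvdE)
  have "F \<noteq> 0" "H \<noteq> 0"
    using assms(1) assms(3)[of 0] H by (auto simp: rsquarefree_def)
  then have "degree H = 0"
    using H assms(2) by (simp add: degree_mult_eq)
  then obtain c where "H = [:c:]"
    by (elim degree_eq_zeroE)
  then show False
    using H assms(3)[of c] by simp
qed

lemma of_nat_eq_iff_below_CHAR: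
  assumes "m < CHAR('k::ring_1)" "n < CHAR('k)"
  shows "of_nat m = (of_nat n :: 'k) \<longleftrightarrow> m = n"
proof
  assume "of_nat m = (of_nat n :: 'k)"
  then have "of_nat (n - m) = (0::'k)" "of_nat (m - n) = (0::'k)"
    by (cases "m \<le> n"; simp add: of_nat_diff)+
  then have "CHAR('k) dvd n - m" "CHAR('k) dvd m - n"
    by (simp_all add: of_nat_eq_0_iff_char_dvd)
  then have "\<not> 0 < n - m" "\<not> 0 < m - n"
    using assms by (auto dest: dvd_imp_le)
  then show "m = n"
    by simp
qed simp

lemma f_poly_not_smult:
  assumes "2 \<le> k" "k \<le> a" "k \<le> b" "a \<noteq> b" "a < CHAR('k::field)" "b < CHAR('k)"
  shows "f_poly b b k \<noteq> smult c (f_poly a a k :: 'k poly)"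
proof
  assume eq: "f_poly b b k = smult c (f_poly a a k :: 'k poly)"
  have absorb: "of_nat k * of_nat (n choose k) = (of_nat n + 1 - of_nat k) * (of_nat (n choose (k - 1)) :: 'k)"
    if "k \<le> n" for n
  proof -
    have "k * (n choose k) = (n + 1 - k) * (n choose (k - 1))"
      using Suc_mult_binomial_Suc[of "k - 1" n] assms(1) that by (simp add: Suc_diff_le)
    then show ?thesis
      using that by (metis of_nat_mult of_nat_diff of_nat_1 of_nat_add le_SucI Suc_eq_plus1)
  qed
  define u where "u = (of_nat (b choose (k - 1)) :: 'k)"
  define v where "v = c * (of_nat (a choose (k - 1)) :: 'k)"
  have "of_nat (b choose k) = c * (of_nat (a choose k) :: 'k)"
    using arg_cong[OF eq, of "\<lambda>F. coeff F 0"] by (simp add: coeff_f_poly)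
  then have "(of_nat b + 1 - of_nat k) * u = (of_nat a + 1 - of_nat k) * v"
    using absorb[OF assms(3)] absorb[OF assms(2)] unfolding u_def v_def
    by (metis mult.left_commute)
  moreover have b_u: "of_nat b * u = of_nat a * v"
    using arg_cong[OF eq, of "\<lambda>F. coeff F 1"] assms(1) unfolding u_def v_def
    by (simp add: coeff_f_poly algebra_simps)
  ultimately have "(of_nat k - 1) * (u - v) = 0"
    by (simp add: algebra_simps)
  moreover have "of_nat k - 1 \<noteq> (0::'k)"
    using of_nat_eq_iff_below_CHAR[of k 1, where 'k='k] assms by simp
  ultimately have "u = v"
    by simp
  with b_u have "(of_nat b - of_nat a) * u = 0"
    by (simp add: algebra_simps)
  moreover have "u \<noteq> 0"
    unfolding u_def using assms by (intro of_nat_choose_neq_0_below_CHAR) auto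
  ultimately show False
    using of_nat_eq_iff_below_CHAR[of b a, where 'k='k] assms by simp
qed

lemma f_poly_root_not_root:
  assumes "2 \<le> k" "k \<le> a" "k \<le> b" "a \<noteq> b" "2 * a < CHAR('k::alg_closed_field)" "b < CHAR('k)"
  shows "\<exists>x::'k. x \<noteq> 0 \<and> x \<noteq> 1 \<and> poly (f_poly a a k) x = 0 \<and> poly (f_poly b b k) x \<noteq> 0"
proof -
  have "\<exists>x::'k. poly (f_poly a a k) x = 0 \<and> poly (f_poly b b k) x \<noteq> 0"
    using assms by (intro exists_root_not_root_of_not_smult rsquarefree_f_poly f_poly_not_smult)
      (simp_all add: degree_f_poly)
  moreover have "poly (f_poly a a k) 0 \<noteq> (0::'k)" "poly (f_poly a a k) 1 \<noteq> (0::'k)"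
    using assms by (simp_all add: poly_f_poly_0 poly_f_poly_1 of_nat_choose_neq_0_below_CHAR)
  ultimately show ?thesis
    by metis
qed

lemma phi2_phi3_eq_f_poly:
  assumes "prime p" "p mod 7 = 1 \<or> p mod 7 = 6" "p \<noteq> 13"
  obtains k a b where "2 \<le> k" "k \<le> a" "a < b" "2 * b < p"
    "phi2 p = (f_poly a a k :: 'k::field poly)" "phi3 p = (f_poly b b (2 * b - k) :: 'k poly)"
proof -
  define k where "k = p div 7"
  have "2 \<le> k"
  proof (rule ccontr)
    assume "\<not> 2 \<le> k"
    with assms(2) have "p = 1 \<or> p = 6 \<or> p = 8 \<or> p = 13"
      unfolding k_def by presburger
    moreover have "\<not> prime (1::nat)" "\<not> prime (6::nat)" "\<not> prime (8::nat)"
      by (auto simp: prime_nat_iff intro!: exI[of _ 2])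
    ultimately show False
      using assms(1,3) by auto
  qed
  show thesis
  proof (cases "p mod 7 = 6")
    case True
    then have "p = 7 * k + 6"
      using div_mult_mod_eq[of p 7] unfolding k_def by linarith
    then have "(2 * p - 5) div 7 = 2 * k + 1" "(p - 6) div 7 = k"
      "(3 * p - 4) div 7 = 3 * k + 2" "(5 * p - 2) div 7 = 2 * (3 * k + 2) - k"
      by simp_all
    then show thesis
      using \<open>2 \<le> k\<close> True by (intro that[of k "2 * k + 1" "3 * k + 2"]) (simp_all add: phi2_def phi3_def)
  next
    case False
    with assms(2) have "p = 7 * k + 1"
      using div_mult_mod_eq[of p 7] unfolding k_def by linarith
    then have "(2 * p - 2) div 7 = 2 * k" "(p - 1) div 7 = k"
      "(3 * p - 3) div 7 = 3 * k" "(5 * p - 5) div 7 = 2 * (3 * k) - k"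
      by simp_all
    then show thesis
      using \<open>2 \<le> k\<close> False by (intro that[of k "2 * k" "3 * k"]) (simp_all add: phi2_def phi3_def)
  qed
qed

theorem lemma5p3:
  fixes p :: nat
  assumes "prime p"
    and "p mod 7 = 1 \<or> p mod 7 = 6"
    and "p \<noteq> 13"
    and "CHAR('k::alg_closed_field) = p"
  shows "(\<exists>\<alpha>::'k. \<alpha> \<noteq> 0 \<and> \<alpha> \<noteq> 1 \<and> poly (phi2 p) \<alpha> = 0 \<and> poly (phi3 p) \<alpha> \<noteq> 0)
       \<and> (\<exists>\<alpha>'::'k. \<alpha>' \<noteq> 0 \<and> \<alpha>' \<noteq> 1 \<and> poly (phi2 p) \<alpha>' \<noteq> 0 \<and> poly (phi3 p) \<alpha>' = 0)"
proof -
  obtain k a b where params: "2 \<le> k" "k \<le> a" "a < b" "2 * b < p"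
    and phi2: "phi2 p = (f_poly a a k :: 'k poly)" and "phi3 p = (f_poly b b (2 * b - k) :: 'k poly)"
    using phi2_phi3_eq_f_poly[OF assms(1-3)] by blast
  then have phi3: "poly (phi3 p) x = x ^ (b - k) * poly (f_poly b b k) x" for x :: 'k
    by (simp add: f_poly_reflect poly_monom)
  have "\<exists>x::'k. x \<noteq> 0 \<and> x \<noteq> 1 \<and> poly (f_poly a a k) x = 0 \<and> poly (f_poly b b k) x \<noteq> 0"
    using params assms(4) by (intro f_poly_root_not_root) auto
  moreover have "\<exists>x::'k. x \<noteq> 0 \<and> x \<noteq> 1 \<and> poly (f_poly b b k) x = 0 \<and> poly (f_poly a a k) x \<noteq> 0"
    using params assms(4) by (intro f_poly_root_not_root) auto
  ultimately show ?thesis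
    unfolding phi2 phi3 by auto
qed

end
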